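(* Let $\mathcal{X}$ be a set, $\mathsf{B}_{\mathcal{X}}=\{-1,1\}^{\mathcal{X}}$, and let $\mathcal{U}_{\mathcal{X}}$ be the set of all unit covariances on $\mathcal{X}$, viewed as a (convex) subset of the real vector space $\mathscr{F}_{\mathcal{X}}$ of symmetric functions $\mathcal{X}\times\mathcal{X}\to\mathbb{R}$. Then the extreme points of $\mathcal{U}_{\mathcal{X}}$ are exactly the functions $u\otimes u$, $u\in\mathsf{B}_{\mathcal{X}}$, where $(u\otimes u)_{x,y}=u_xu_y$.
   Context: A unit field on $\mathcal{X}$ is a random element $X$ of $\mathsf{B}_{\mathcal{X}}=\{-1,1\}^{\mathcal{X}}$ (with the discrete structure). Its unit covariance is $\rho^X_{x,y}=\mathbf{E}[X_xX_y]=2\mathbb{P}(X_x=X_y)-1$, $x,y\in\mathcal{X}$. A symmetric function $\rho$ is a unit covariance if $\rho=\rho^X$ for some unit field $X$. An extreme point of a convex set $C$ is a point $x\in C$ such that whenever $x\in[y,z]$ with $y,z\in C$, then $x=y$ or $x=z$. *)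

theory Defs
  imports "HOL-Probability.Probability"
begin

definition sign_config :: "('a \<Rightarrow> real) \<Rightarrow> bool" where
  "sign_config u \<longleftrightarrow> (\<forall>x. u x \<in> {-1, 1})"

text \<open>A unit field on X (the type 'a), defined on a probability space M: a random element
  of {-1,1}^X, i.e. every coordinate is a random variable with values in {-1,1}
  (product of the discrete structures on {-1,1}).\<close>
definition unit_field :: "'b measure \<Rightarrow> ('b \<Rightarrow> 'a \<Rightarrow> real) \<Rightarrow> bool" where
  "unit_field M X \<longleftrightarrow> prob_space M \<and>
     (\<forall>x. (\<lambda>\<omega>. X \<omega> x) \<in> borel_measurable M) \<and>
     (\<forall>\<omega>\<in>space M. sign_config (X \<omega>))"

definition unit_covariance :: "'b measure \<Rightarrow> ('b \<Rightarrow> 'a \<Rightarrow> real) \<Rightarrow> 'a \<Rightarrow> 'a \<Rightarrow> real" where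
  "unit_covariance M X = (\<lambda>x y. integral\<^sup>L M (\<lambda>\<omega>. X \<omega> x * X \<omega> y))"

text \<open>The sample space is taken to be
  {-1,1}^X itself (type 'a => real); every unit field can be replaced by its law there,
  so this is no loss of generality (HOL cannot quantify over sample-space types).\<close>
definition unit_covariances :: "('a \<Rightarrow> 'a \<Rightarrow> real) set" where
  "unit_covariances = {\<rho>. \<exists>(M :: ('a \<Rightarrow> real) measure) X. unit_field M X \<and> \<rho> = unit_covariance M X}"

definition fsegment :: "('a \<Rightarrow> 'a \<Rightarrow> real) \<Rightarrow> ('a \<Rightarrow> 'a \<Rightarrow> real) \<Rightarrow> ('a \<Rightarrow> 'a \<Rightarrow> real) set" where
  "fsegment s t = {(\<lambda>x y. (1 - \<theta>) * s x y + \<theta> * t x y) | \<theta>. 0 \<le> \<theta> \<and> \<theta> \<le> 1}"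

definition fextreme_point :: "('a \<Rightarrow> 'a \<Rightarrow> real) \<Rightarrow> ('a \<Rightarrow> 'a \<Rightarrow> real) set \<Rightarrow> bool" where
  "fextreme_point r C \<longleftrightarrow> r \<in> C \<and>
     (\<forall>s\<in>C. \<forall>t\<in>C. r \<in> fsegment s t \<longrightarrow> r = s \<or> r = t)"

definition tensor_sq :: "('a \<Rightarrow> real) \<Rightarrow> 'a \<Rightarrow> 'a \<Rightarrow> real" where
  "tensor_sq u = (\<lambda>x y. u x * u y)"

end

theory Submission
  imports Defs
begin

text \<open>Every unit covariance has entries in \<open>[-1,1]\<close>, while \<open>u \<otimes> u\<close> has entries \<open>\<plusminus>1\<close>, which are extreme
  in \<open>[-1,1]\<close>; so \<open>u \<otimes> u\<close> is not a proper convex combination of unit covariances.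
  Conversely let \<open>\<rho> = E[X \<otimes> X]\<close> be extreme. Conditioning \<open>X\<close> on the event \<open>X\<^sub>x X\<^sub>y = 1\<close> and on its
  complement (the measures \<open>uniform_measure\<close>) writes \<open>\<rho>\<close> as a convex combination of two unit covariances
  whose \<open>(x,y)\<close>-entries are \<open>1\<close> and \<open>-1\<close>; unless the event is null or conull, extremality forces
  \<open>\<rho>\<^sub>x\<^sub>,\<^sub>y = \<plusminus>1\<close>. Hence for a fixed \<open>z\<close> every product \<open>X\<^sub>z X\<^sub>x\<close> is almost surely the constant
  \<open>\<rho>\<^sub>z\<^sub>,\<^sub>x\<close>, and \<open>X\<^sub>x X\<^sub>y = (X\<^sub>z X\<^sub>x)(X\<^sub>z X\<^sub>y)\<close> gives \<open>\<rho> = \<rho>\<^sub>z \<otimes> \<rho>\<^sub>z\<close>.\<close>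

lemma integral_uniform_measure:
  fixes f :: "'a \<Rightarrow> real"
  assumes "finite_measure M" "A \<in> sets M" "measure M A \<noteq> 0" "f \<in> borel_measurable M"
  shows "integral\<^sup>L (uniform_measure M A) f = integral\<^sup>L M (\<lambda>\<omega>. f \<omega> * indicator A \<omega>) / measure M A"
proof -
  interpret finite_measure M by fact
  have "0 < measure M A" using assms(3) zero_less_measure_iff by blast
  then have "indicator A \<omega> / emeasure M A = ennreal (indicator A \<omega> / measure M A)" for \<omega>
    by (simp add: emeasure_eq_measure divide_ennreal[symmetric] indicator_def ennreal_1[symmetric]
        del: ennreal_1)
  then have "uniform_measure M A = density M (\<lambda>\<omega>. ennreal (indicator A \<omega> / measure M A))"
    by (simp add: uniform_measure_def)
  also have "integral\<^sup>L \<dots> f = integral\<^sup>L M (\<lambda>\<omega>. (indicator A \<omega> / measure M A) *\<^sub>R f \<omega>)"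
    using assms by (intro integral_density) auto
  finally show ?thesis by (simp add: mult.commute)
qed

lemma (in prob_space) expectation_split_uniform_measure:
  fixes f :: "'a \<Rightarrow> real"
  assumes f: "integrable M f" and A: "A \<in> sets M" and p: "0 < prob A" "prob A < 1"
  shows "expectation f = (1 - prob A) * integral\<^sup>L (uniform_measure M (space M - A)) f
                         + prob A * integral\<^sup>L (uniform_measure M A) f"
proof -
  have B: "space M - A \<in> sets M" using A by auto
  have pB: "prob (space M - A) = 1 - prob A" using prob_compl[OF A] .
  have "expectation f = integral\<^sup>L M (\<lambda>\<omega>. f \<omega> * indicator (space M - A) \<omega> + f \<omega> * indicator A \<omega>)"
    by (intro Bochner_Integration.integral_cong) (auto simp: indicator_def)
  also have "\<dots> = integral\<^sup>L M (\<lambda>\<omega>. f \<omega> * indicator (space M - A) \<omega>)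
                 + integral\<^sup>L M (\<lambda>\<omega>. f \<omega> * indicator A \<omega>)"
    using A B f by (intro Bochner_Integration.integral_add integrable_real_mult_indicator)
  finally show ?thesis
    using p pB f A B by (simp add: integral_uniform_measure borel_measurable_integrable)
qed

lemma sign_config_iff_abs_eq_1: "sign_config u \<longleftrightarrow> (\<forall>x. \<bar>u x\<bar> = 1)"
proof -
  have "\<bar>a\<bar> = 1 \<longleftrightarrow> a \<in> {-1, 1}" for a :: real by auto
  then show ?thesis by (simp add: sign_config_def)
qed

lemma unit_field_prob_space: "unit_field M X \<Longrightarrow> prob_space M"
  by (simp add: unit_field_def)

lemma unit_field_borel_measurable: "unit_field M X \<Longrightarrow> (\<lambda>\<omega>. X \<omega> x) \<in> borel_measurable M"
  by (simp add: unit_field_def)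

lemma unit_field_values: "unit_field M X \<Longrightarrow> \<omega> \<in> space M \<Longrightarrow> X \<omega> x = 1 \<or> X \<omega> x = -1"
  by (auto simp: unit_field_def sign_config_def)

lemma unit_field_prod_values:
  "unit_field M X \<Longrightarrow> \<omega> \<in> space M \<Longrightarrow> X \<omega> x * X \<omega> y = 1 \<or> X \<omega> x * X \<omega> y = -1"
  using unit_field_values[of M X \<omega> x] unit_field_values[of M X \<omega> y] by auto

lemma abs_unit_field_prod:
  "unit_field M X \<Longrightarrow> \<omega> \<in> space M \<Longrightarrow> \<bar>X \<omega> x * X \<omega> y\<bar> = 1"
  using unit_field_prod_values[of M X \<omega> x y] by auto

lemma integrable_unit_field_prod:
  assumes "unit_field M X"
  shows "integrable M (\<lambda>\<omega>. X \<omega> x * X \<omega> y)"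
proof (rule finite_measure.integrable_const_bound[where B=1])
  show "finite_measure M"
    using unit_field_prob_space[OF assms] by (rule prob_space.finite_measure)
  show "AE \<omega> in M. norm (X \<omega> x * X \<omega> y) \<le> 1"
    by (intro AE_I2) (simp add: abs_unit_field_prod[OF assms])
  show "(\<lambda>\<omega>. X \<omega> x * X \<omega> y) \<in> borel_measurable M"
    using unit_field_borel_measurable[OF assms] by simp
qed

lemma unit_field_uniform_measure:
  assumes "unit_field M X" "A \<in> sets M" "measure M A \<noteq> 0"
  shows "unit_field (uniform_measure M A) X"
proof -
  interpret prob_space M using assms(1) by (rule unit_field_prob_space)
  have "prob_space (uniform_measure M A)"
    using assms(2,3) by (intro prob_space_uniform_measure) (auto simp: emeasure_eq_measure)
  then show ?thesis
    using assms(1) by (simp add: unit_field_def cong: measurable_cong_sets)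
qed

lemma unit_covariance_eq_if_AE:
  assumes "unit_field M X" "AE \<omega> in M. X \<omega> x * X \<omega> y = c"
  shows "unit_covariance M X x y = c"
proof -
  interpret prob_space M using assms(1) by (rule unit_field_prob_space)
  have "unit_covariance M X x y = expectation (\<lambda>_. c)"
    unfolding unit_covariance_def
    using assms unit_field_borel_measurable[OF assms(1)] by (intro integral_cong_AE) auto
  then show ?thesis by (simp add: prob_space)
qed

text \<open>\<open>1 - c X\<^sub>x X\<^sub>y\<close> is nonnegative with expectation \<open>1 - c\<^sup>2 = 0\<close>.\<close>
lemma AE_prod_eq_unit_covariance:
  assumes uf: "unit_field M X" and c: "\<bar>unit_covariance M X x y\<bar> = 1"
  shows "AE \<omega> in M. X \<omega> x * X \<omega> y = unit_covariance M X x y"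
proof -
  interpret prob_space M using uf by (rule unit_field_prob_space)
  define c where "c = unit_covariance M X x y"
  let ?g = "\<lambda>\<omega>. 1 - c * (X \<omega> x * X \<omega> y)"
  have cc: "c * c = 1" "c = 1 \<or> c = -1" using c by (auto simp: c_def abs_if split: if_splits)
  have int: "integrable M ?g"
    using integrable_unit_field_prod[OF uf] by auto
  have "integral\<^sup>L M ?g = 1 - c * c"
    using integrable_unit_field_prod[OF uf] by (simp add: prob_space c_def unit_covariance_def)
  moreover have "AE \<omega> in M. 0 \<le> ?g \<omega>"
  proof (rule AE_I2)
    fix \<omega> assume "\<omega> \<in> space M"
    then show "0 \<le> ?g \<omega>" using unit_field_prod_values[OF uf, of \<omega> x y] cc(2) by auto
  qed
  ultimately have "AE \<omega> in M. ?g \<omega> = 0"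
    using int cc(1) integral_nonneg_eq_0_iff_AE[of M ?g] by simp
  then show ?thesis
    by (rule AE_mp) (use cc(2) in \<open>auto simp: c_def[symmetric]\<close>)
qed

lemma unit_covariance_in_unit_covariances:
  fixes M :: "('a \<Rightarrow> real) measure" and X :: "('a \<Rightarrow> real) \<Rightarrow> 'a \<Rightarrow> real"
  shows "unit_field M X \<Longrightarrow> unit_covariance M X \<in> unit_covariances"
  unfolding unit_covariances_def by blast

lemma abs_unit_covariance_le_1:
  assumes "\<rho> \<in> unit_covariances"
  shows "\<bar>\<rho> x y\<bar> \<le> 1"
proof -
  obtain M :: "('a \<Rightarrow> real) measure" and X where uf: "unit_field M X" and \<rho>: "\<rho> = unit_covariance M X"
    using assms by (auto simp: unit_covariances_def)
  interpret prob_space M using uf by (rule unit_field_prob_space)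
  have "\<bar>\<rho> x y\<bar> \<le> expectation (\<lambda>\<omega>. \<bar>X \<omega> x * X \<omega> y\<bar>)"
    unfolding \<rho> unit_covariance_def by (rule integral_abs_bound)
  also have "\<dots> = expectation (\<lambda>_. 1)"
    by (intro Bochner_Integration.integral_cong) (simp_all add: abs_unit_field_prod[OF uf])
  finally show ?thesis by (simp add: prob_space)
qed

lemma tensor_sq_in_unit_covariances:
  assumes "sign_config u"
  shows "tensor_sq u \<in> unit_covariances"
proof -
  let ?M = "return (count_space UNIV) u"
  have ps: "prob_space ?M" by (rule prob_space_return) simp
  then have "unit_field ?M (\<lambda>_. u)" and "tensor_sq u = unit_covariance ?M (\<lambda>_. u)"
    using assms prob_space.prob_space[OF ps]
    by (simp_all add: unit_field_def unit_covariance_def tensor_sq_def)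
  then show ?thesis by (simp add: unit_covariance_in_unit_covariances)
qed

lemma convex_combination_eq_sign:
  fixes a b c \<theta> :: real
  assumes "\<bar>a\<bar> \<le> 1" "\<bar>b\<bar> \<le> 1" "\<bar>c\<bar> = 1" "0 < \<theta>" "\<theta> < 1" "(1 - \<theta>) * a + \<theta> * b = c"
  shows "a = c"
proof -
  have cc: "c * c = 1" using assms(3) by (metis abs_mult_self_eq mult_1)
  have "(1 - \<theta>) * (1 - c * a) + \<theta> * (1 - c * b) = 1 - c * c"
    by (simp add: algebra_simps flip: assms(6))
  moreover have "\<bar>c * a\<bar> \<le> 1" "\<bar>c * b\<bar> \<le> 1"
    using assms(1-3) by (simp_all add: abs_mult)
  then have "0 \<le> 1 - c * a" "0 \<le> 1 - c * b"
    by (simp_all add: abs_le_iff)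
  ultimately have "1 - c * a = 0"
    using assms(4,5) cc by (smt (verit) mult_nonneg_nonneg mult_pos_pos)
  then show ?thesis using cc by (metis eq_iff_diff_eq_0 mult.assoc mult_1)
qed

lemma fextreme_point_tensor_sq:
  assumes u: "sign_config u"
  shows "fextreme_point (tensor_sq u) unit_covariances"
  unfolding fextreme_point_def
proof (intro conjI ballI impI)
  show "tensor_sq u \<in> unit_covariances" using u by (rule tensor_sq_in_unit_covariances)
  fix s t assume s: "s \<in> unit_covariances" and t: "t \<in> unit_covariances"
    and "tensor_sq u \<in> fsegment s t"
  then obtain \<theta> where \<theta>: "0 \<le> \<theta>" "\<theta> \<le> 1"
    and eq: "tensor_sq u = (\<lambda>x y. (1 - \<theta>) * s x y + \<theta> * t x y)"
    by (auto simp: fsegment_def)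
  show "tensor_sq u = s \<or> tensor_sq u = t"
  proof (cases "\<theta> = 0 \<or> \<theta> = 1")
    case True
    then show ?thesis using eq by auto
  next
    case False
    have "s x y = tensor_sq u x y" for x y
    proof (rule convex_combination_eq_sign)
      show "\<bar>s x y\<bar> \<le> 1" "\<bar>t x y\<bar> \<le> 1"
        using s t by (simp_all add: abs_unit_covariance_le_1)
      show "\<bar>tensor_sq u x y\<bar> = 1"
        using u by (simp add: sign_config_iff_abs_eq_1 tensor_sq_def abs_mult)
      show "0 < \<theta>" "\<theta> < 1" using \<theta> False by simp_all
      show "(1 - \<theta>) * s x y + \<theta> * t x y = tensor_sq u x y"
        using eq by (simp add: fun_eq_iff)
    qed
    then show ?thesis by (simp add: fun_eq_iff)
  qed
qed

lemma unit_covariance_in_fsegment_uniform_measure: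
  assumes uf: "unit_field M X" and A: "A \<in> sets M" and p: "0 < measure M A" "measure M A < 1"
  shows "unit_covariance M X
    \<in> fsegment (unit_covariance (uniform_measure M (space M - A)) X) (unit_covariance (uniform_measure M A) X)"
proof -
  interpret prob_space M using uf by (rule unit_field_prob_space)
  have "unit_covariance M X = (\<lambda>x y. (1 - prob A) * unit_covariance (uniform_measure M (space M - A)) X x y
                                   + prob A * unit_covariance (uniform_measure M A) X x y)"
    unfolding unit_covariance_def
    using integrable_unit_field_prod[OF uf] A p by (simp add: expectation_split_uniform_measure)
  then show ?thesis
    using p unfolding fsegment_def by auto
qed

lemma fextreme_point_unit_covariances_abs_eq_1:
  assumes extreme: "fextreme_point \<rho> unit_covariances"
  shows "\<bar>\<rho> x y\<bar> = 1"
proof -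
  obtain M :: "('a \<Rightarrow> real) measure" and X where uf: "unit_field M X" and \<rho>: "\<rho> = unit_covariance M X"
    using extreme by (auto simp: fextreme_point_def unit_covariances_def)
  interpret prob_space M using uf by (rule unit_field_prob_space)
  define A where "A = {\<omega> \<in> space M. X \<omega> x * X \<omega> y = 1}"
  have A_sets: "A \<in> sets M"
    unfolding A_def using unit_field_borel_measurable[OF uf] by measurable
  have prod_off_A: "X \<omega> x * X \<omega> y = -1" if "\<omega> \<in> space M" "\<omega> \<notin> A" for \<omega>
    using unit_field_prod_values[OF uf that(1)] that by (auto simp: A_def)
  consider "prob A = 0" | "prob A = 1" | "0 < prob A" "prob A < 1"
    using measure_nonneg[of M A] prob_le_1[of A] by linarith
  then show ?thesis
  proof cases
    case 1
    then have "AE \<omega> in M. X \<omega> x * X \<omega> y = -1"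
      using A_sets prod_off_A by (auto simp: prob_eq_0)
    then show ?thesis using uf by (simp add: \<rho> unit_covariance_eq_if_AE)
  next
    case 2
    then have "AE \<omega> in M. X \<omega> x * X \<omega> y = 1"
      using A_sets by (auto simp: prob_eq_1 A_def)
    then show ?thesis using uf by (simp add: \<rho> unit_covariance_eq_if_AE)
  next
    case 3
    let ?B = "space M - A"
    have B_sets: "?B \<in> sets M" and "prob ?B \<noteq> 0"
      using A_sets 3 by (auto simp: prob_compl)
    then have ufB: "unit_field (uniform_measure M ?B) X"
      using uf by (simp add: unit_field_uniform_measure)
    have ufA: "unit_field (uniform_measure M A) X"
      using uf A_sets 3 by (simp add: unit_field_uniform_measure)
    have "unit_covariance (uniform_measure M A) X x y = 1"
      using ufA A_sets by (intro unit_covariance_eq_if_AE AE_uniform_measureI) (auto simp: A_def)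
    moreover have "unit_covariance (uniform_measure M ?B) X x y = -1"
      using ufB B_sets prod_off_A by (intro unit_covariance_eq_if_AE AE_uniform_measureI) auto
    moreover have "\<rho> = unit_covariance (uniform_measure M ?B) X \<or> \<rho> = unit_covariance (uniform_measure M A) X"
      using extreme ufA ufB unit_covariance_in_fsegment_uniform_measure[OF uf A_sets 3]
      by (simp add: \<rho> fextreme_point_def unit_covariance_in_unit_covariances)
    ultimately show ?thesis by auto
  qed
qed

lemma fextreme_point_unit_covariances_eq_tensor_sq:
  assumes extreme: "fextreme_point \<rho> unit_covariances"
  shows "\<rho> = tensor_sq (\<rho> z0)"
proof (intro ext)
  fix x y
  obtain M :: "('a \<Rightarrow> real) measure" and X where uf: "unit_field M X" and \<rho>: "\<rho> = unit_covariance M X"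
    using extreme by (auto simp: fextreme_point_def unit_covariances_def)
  have AE_z0: "AE \<omega> in M. X \<omega> z0 * X \<omega> v = \<rho> z0 v" for v
    using uf fextreme_point_unit_covariances_abs_eq_1[OF extreme] by (simp add: \<rho> AE_prod_eq_unit_covariance)
  note AE_z0[of x] AE_z0[of y]
  moreover have "AE \<omega> in M. X \<omega> x * X \<omega> y = (X \<omega> z0 * X \<omega> x) * (X \<omega> z0 * X \<omega> y)"
  proof (rule AE_I2)
    fix \<omega> assume "\<omega> \<in> space M"
    then have "X \<omega> z0 * X \<omega> z0 = 1" using unit_field_values[OF uf, of \<omega> z0] by auto
    then show "X \<omega> x * X \<omega> y = (X \<omega> z0 * X \<omega> x) * (X \<omega> z0 * X \<omega> y)"
      by (metis mult.assoc mult.left_commute mult_1)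
  qed
  ultimately have "AE \<omega> in M. X \<omega> x * X \<omega> y = \<rho> z0 x * \<rho> z0 y"
    by eventually_elim (simp only:)
  then show "\<rho> x y = tensor_sq (\<rho> z0) x y"
    using uf by (simp add: \<rho> tensor_sq_def unit_covariance_eq_if_AE)
qed

theorem proposition1:
  "{\<rho> :: 'a \<Rightarrow> 'a \<Rightarrow> real. fextreme_point \<rho> unit_covariances} =
   {tensor_sq u | u. sign_config u}"
proof (intro equalityI subsetI)
  fix \<rho> :: "'a \<Rightarrow> 'a \<Rightarrow> real"
  assume "\<rho> \<in> {\<rho>. fextreme_point \<rho> unit_covariances}"
  then have extreme: "fextreme_point \<rho> unit_covariances" by simp
  have "sign_config (\<rho> undefined)"
    using fextreme_point_unit_covariances_abs_eq_1[OF extreme] by (simp add: sign_config_iff_abs_eq_1)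
  then show "\<rho> \<in> {tensor_sq u | u. sign_config u}"
    using fextreme_point_unit_covariances_eq_tensor_sq[OF extreme] by blast
qed (auto simp: fextreme_point_tensor_sq)

end
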